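(* Let $w_0\in\mathbb{N}$ and $w=(w_1,\dots,w_n)\in\mathbb{N}^n$ with each $w_i\le 2^{n^2}$, let $M=cn$ for a sufficiently large absolute constant $c>0$, let $\lambda=M\|w\|_2$, and define $p_W(x)=\left(\sum_{i=1}^n w_ix_i-w_0\right)^2+\lambda\sum_{i=1}^n x_i(1-x_i)$, $f_W(x)=\mathrm{sign}(\tfrac12-p_W(x))$, and $\alpha_n=\frac12\left(1-\sqrt{1-2/\lambda}\right)$. If $x\in[0,1]^n$ is at $\ell_1$ distance more than $\alpha_n$ from every point of $\{0,1\}^n$, then $f_W(x)=-1$.
   Context: $\mathrm{sign}(0)=1$; $\|w\|_2$ is the Euclidean norm. *)

theory Defs
  imports Complex_Main
begin

definition sign1 :: "real \<Rightarrow> real" where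
  "sign1 t = (if t \<ge> 0 then 1 else -1)"

text \<open>Vectors in R^n / N^n are functions on the index set {1..n}.\<close>
definition l2norm :: "nat \<Rightarrow> (nat \<Rightarrow> nat) \<Rightarrow> real" where
  "l2norm n w = sqrt (\<Sum>i=1..n. (real (w i))\<^sup>2)"

definition lam :: "real \<Rightarrow> nat \<Rightarrow> (nat \<Rightarrow> nat) \<Rightarrow> real" where
  "lam c n w = (c * real n) * l2norm n w"

definition pW :: "real \<Rightarrow> nat \<Rightarrow> nat \<Rightarrow> (nat \<Rightarrow> nat) \<Rightarrow> (nat \<Rightarrow> real) \<Rightarrow> real" where
  "pW c n w0 w x = ((\<Sum>i=1..n. real (w i) * x i) - real w0)\<^sup>2
                   + lam c n w * (\<Sum>i=1..n. x i * (1 - x i))"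

definition fW :: "real \<Rightarrow> nat \<Rightarrow> nat \<Rightarrow> (nat \<Rightarrow> nat) \<Rightarrow> (nat \<Rightarrow> real) \<Rightarrow> real" where
  "fW c n w0 w x = sign1 (1/2 - pW c n w0 w x)"

definition alpha :: "real \<Rightarrow> nat \<Rightarrow> (nat \<Rightarrow> nat) \<Rightarrow> real" where
  "alpha c n w = (1 - sqrt (1 - 2 / lam c n w)) / 2"

definition l1dist :: "nat \<Rightarrow> (nat \<Rightarrow> real) \<Rightarrow> (nat \<Rightarrow> real) \<Rightarrow> real" where
  "l1dist n x v = (\<Sum>i=1..n. \<bar>x i - v i\<bar>)"

end

theory Submission
  imports Defs
begin

text \<open>
  Let \<open>d\<^sub>i\<close> be the distance of \<open>x\<^sub>i\<close> to the nearer of \<open>0\<close> and \<open>1\<close>, so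
  \<open>x\<^sub>i (1 - x\<^sub>i) = d\<^sub>i (1 - d\<^sub>i)\<close> and \<open>D = \<Sum> d\<^sub>i\<close> is the \<open>\<ell>\<^sub>1\<close> distance from \<open>x\<close>
  to the nearest vertex of the cube, hence \<open>D > \<alpha>\<close>. Since \<open>d\<^sub>i \<le> 1/2\<close>, the penalty
  \<open>\<Sum> d\<^sub>i (1 - d\<^sub>i)\<close> is at least \<open>D (1 - D)\<close> and at least \<open>D/2\<close>. Now \<open>\<alpha>\<close> is the
  smaller root of \<open>\<lambda> t (1 - t) = 1/2\<close>, so for \<open>\<alpha> < D \<le> 1/2\<close> the first bound gives
  \<open>\<lambda> \<Sum> d\<^sub>i (1 - d\<^sub>i) > 1/2\<close>, and for \<open>D > 1/2\<close> the second one does as soon as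
  \<open>\<lambda> \<ge> 2\<close>. Then \<open>p\<^sub>W(x) > 1/2\<close>.
\<close>

lemma sum_power2_le_power2_sum:
  fixes d :: "'a \<Rightarrow> 'b::linordered_semidom"
  assumes "\<And>i. i \<in> A \<Longrightarrow> 0 \<le> d i"
  shows "(\<Sum>i\<in>A. (d i)\<^sup>2) \<le> (\<Sum>i\<in>A. d i)\<^sup>2"
  using assms
proof (induction A rule: infinite_finite_induct)
  case (insert a F)
  have "0 \<le> d a * sum d F" using insert.prems by (simp add: sum_nonneg)
  have "(\<Sum>i\<in>insert a F. (d i)\<^sup>2) = (d a)\<^sup>2 + (\<Sum>i\<in>F. (d i)\<^sup>2)"
    using insert.hyps by simp
  also have "\<dots> \<le> (d a)\<^sup>2 + (sum d F)\<^sup>2"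
    using insert.IH insert.prems by (simp add: add_left_mono)
  also have "\<dots> \<le> (d a + sum d F)\<^sup>2"
    using \<open>0 \<le> d a * sum d F\<close> by (simp add: power2_sum mult.assoc)
  finally show ?case using insert.hyps by simp
qed auto

lemma mult_one_minus_less_mono:
  fixes a t :: real
  assumes "a < t" "t \<le> 1/2"
  shows "a * (1 - a) < t * (1 - t)"
proof -
  have "0 < (t - a) * (1 - t - a)" using assms by (intro mult_pos_pos) auto
  then show ?thesis by (simp add: algebra_simps)
qed

lemma sum_mult_one_minus_lower_bounds:
  fixes d :: "'a \<Rightarrow> real"
  assumes "\<And>i. i \<in> A \<Longrightarrow> 0 \<le> d i \<and> d i \<le> 1/2"
  shows "sum d A * (1 - sum d A) \<le> (\<Sum>i\<in>A. d i * (1 - d i))"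
    and "sum d A / 2 \<le> (\<Sum>i\<in>A. d i * (1 - d i))"
proof -
  have penalty_eq: "(\<Sum>i\<in>A. d i * (1 - d i)) = sum d A - (\<Sum>i\<in>A. (d i)\<^sup>2)"
    by (simp add: power2_eq_square algebra_simps sum_subtractf)
  have "(\<Sum>i\<in>A. (d i)\<^sup>2) \<le> (sum d A)\<^sup>2"
    using assms by (intro sum_power2_le_power2_sum) auto
  then show "sum d A * (1 - sum d A) \<le> (\<Sum>i\<in>A. d i * (1 - d i))"
    unfolding penalty_eq by (simp add: power2_eq_square algebra_simps)
  have "(\<Sum>i\<in>A. (d i)\<^sup>2) \<le> (\<Sum>i\<in>A. d i / 2)"
  proof (rule sum_mono)
    fix i assume "i \<in> A"
    with assms have "0 \<le> d i" "d i \<le> 1/2" by auto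
    then show "(d i)\<^sup>2 \<le> d i / 2"
      using mult_left_mono[of "d i" "1/2" "d i"] by (simp add: power2_eq_square)
  qed
  then show "sum d A / 2 \<le> (\<Sum>i\<in>A. d i * (1 - d i))"
    unfolding penalty_eq sum_divide_distrib[symmetric] by simp
qed

lemma smaller_root_mult_one_minus:
  fixes l :: real
  assumes "2 \<le> l"
  defines "a \<equiv> (1 - sqrt (1 - 2 / l)) / 2"
  shows "l * (a * (1 - a)) = 1/2" and "0 < a" and "a \<le> 1/2"
proof -
  define s where "s = sqrt (1 - 2 / l)"
  have s: "0 \<le> s" "s < 1" "s\<^sup>2 = 1 - 2 / l"
    using assms(1) by (auto simp: s_def field_simps)
  have "a * (1 - a) = (1 - s\<^sup>2) / 4"
    unfolding a_def s_def[symmetric] by (simp add: power2_eq_square field_simps)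
  then show "l * (a * (1 - a)) = 1/2" using s(3) assms(1) by (simp add: field_simps)
  show "0 < a" "a \<le> 1/2" using s unfolding a_def s_def[symmetric] by auto
qed

lemma penalty_gt_half:
  fixes d :: "'a \<Rightarrow> real" and l :: real
  assumes "2 \<le> l"
    and "\<And>i. i \<in> A \<Longrightarrow> 0 \<le> d i \<and> d i \<le> 1/2"
    and "(1 - sqrt (1 - 2 / l)) / 2 < sum d A"
  shows "1/2 < l * (\<Sum>i\<in>A. d i * (1 - d i))"
proof (cases "sum d A \<le> 1/2")
  case True
  let ?a = "(1 - sqrt (1 - 2 / l)) / 2"
  have "1/2 = l * (?a * (1 - ?a))" using smaller_root_mult_one_minus(1)[OF assms(1)] by simp
  also have "\<dots> < l * (sum d A * (1 - sum d A))"
    using assms True by (intro mult_strict_left_mono mult_one_minus_less_mono) auto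
  also have "\<dots> \<le> l * (\<Sum>i\<in>A. d i * (1 - d i))"
    using assms by (intro mult_left_mono sum_mult_one_minus_lower_bounds(1)) auto
  finally show ?thesis .
next
  case False
  have "1/2 < 2 * (sum d A / 2)" using False by simp
  also have "\<dots> \<le> l * (sum d A / 2)" using False assms(1) by (intro mult_right_mono) auto
  also have "\<dots> \<le> l * (\<Sum>i\<in>A. d i * (1 - d i))"
    using assms by (intro mult_left_mono sum_mult_one_minus_lower_bounds(2)) auto
  finally show ?thesis .
qed

definition round01 :: "real \<Rightarrow> real" where
  "round01 t = (if 1/2 \<le> t then 1 else 0)"

lemma dist_round01:
  assumes "0 \<le> t" "t \<le> 1"
  shows "\<bar>t - round01 t\<bar> \<le> 1/2"
    and "t * (1 - t) = \<bar>t - round01 t\<bar> * (1 - \<bar>t - round01 t\<bar>)"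
  using assms by (auto simp: round01_def algebra_simps)

lemma l2norm_ge_one:
  assumes "\<exists>i\<in>{1..n}. w i \<noteq> 0"
  shows "1 \<le> l2norm n w"
proof -
  obtain j where j: "j \<in> {1..n}" "w j \<noteq> 0" using assms by blast
  then have "1 \<le> (real (w j))\<^sup>2" by (simp add: one_le_power)
  also have "\<dots> \<le> (\<Sum>i=1..n. (real (w i))\<^sup>2)" using j by (intro member_le_sum) auto
  finally show ?thesis unfolding l2norm_def by (simp add: real_le_rsqrt)
qed

lemma c_le_lam:
  assumes "0 \<le> c" "\<exists>i\<in>{1..n}. w i \<noteq> 0"
  shows "c \<le> lam c n w"
proof -
  have "1 \<le> real n" using assms(2) by auto
  then have "c * 1 * 1 \<le> c * real n * l2norm n w"
    using assms l2norm_ge_one by (intro mult_mono) auto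
  then show ?thesis unfolding lam_def by simp
qed

theorem claim5p8:
  shows "\<exists>c0>0. \<forall>c\<ge>c0. \<forall>(n::nat) (w0::nat) (w::nat \<Rightarrow> nat) (x::nat \<Rightarrow> real).
     (\<forall>i\<in>{1..n}. w i \<le> 2 ^ (n\<^sup>2)) \<longrightarrow>
     (\<exists>i\<in>{1..n}. w i \<noteq> 0) \<longrightarrow>
     (\<forall>i\<in>{1..n}. 0 \<le> x i \<and> x i \<le> 1) \<longrightarrow>
     (\<forall>v::nat \<Rightarrow> real. (\<forall>i\<in>{1..n}. v i \<in> {0, 1}) \<longrightarrow> l1dist n x v > alpha c n w) \<longrightarrow>
     fW c n w0 w x = -1"
proof (intro exI[of _ 2] conjI allI impI)
  fix c :: real and n w0 w and x :: "nat \<Rightarrow> real"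
  assume "2 \<le> c" and nonzero: "\<exists>i\<in>{1..n}. w i \<noteq> 0"
    and cube: "\<forall>i\<in>{1..n}. 0 \<le> x i \<and> x i \<le> 1"
    and far: "\<forall>v::nat \<Rightarrow> real. (\<forall>i\<in>{1..n}. v i \<in> {0, 1}) \<longrightarrow> l1dist n x v > alpha c n w"
  define d where "d i = \<bar>x i - round01 (x i)\<bar>" for i
  have "c \<le> lam c n w" using \<open>2 \<le> c\<close> nonzero by (intro c_le_lam) auto
  with \<open>2 \<le> c\<close> have lam: "2 \<le> lam c n w" by simp
  have "alpha c n w < sum d {1..n}"
    using far[rule_format, of "\<lambda>i. round01 (x i)"]
    unfolding l1dist_def d_def round01_def by auto
  then have "1/2 < lam c n w * (\<Sum>i=1..n. d i * (1 - d i))"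
    using lam cube dist_round01(1) unfolding alpha_def d_def
    by (intro penalty_gt_half) auto
  also have "\<dots> = lam c n w * (\<Sum>i=1..n. x i * (1 - x i))"
    using cube dist_round01(2) unfolding d_def by (intro arg_cong[where f = "(*) _"] sum.cong) auto
  also have "\<dots> \<le> pW c n w0 w x" unfolding pW_def by simp
  finally show "fW c n w0 w x = -1" unfolding fW_def sign1_def by simp
qed simp

end
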